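(* Let $r\geq k+1$. Let $\mathcal{P}$ be a finite classical polar space of rank $r$ with parameter $e$ naturally embedded in $V(n,q)$, and let $H$ be a degenerate hyperplane of $\mathcal{P}$ in $V(n,q)$. Then the number of $k$-spaces of $\mathcal{P}$ contained in $H$ equals \[ \frac{q^{2r+e-k-1}+q^r-q^{r+e-1}-1}{(q^r-1)(q^{r+e-1}+1)} \] times the total number of $k$-spaces of $\mathcal{P}$.
   Context: A finite classical polar space is the geometry of totally isotropic (totally singular) subspaces of $V(n,q)=\mathbb{F}_q^n$ with respect to a non-degenerate quadratic form or non-degenerate reflexive sesquilinear form, with associated polarity $\perp$. Dimensions are algebraic: a $k$-space of $\mathcal{P}$ is a totally isotropic subspace of vector dimension $k$; the rank $r$ is the maximal such dimension and generators are the $r$-spaces. The parameter $e$ is defined by the property that every $(r-1)$-space lies in exactly $q^e+1$ generators ($e=0$ for $Q^+(2r-1,q)$, $1/2$ for $H(2r-1,q)$, $1$ for $W(2r-1,q)$ and $Q(2r,q)$, $3/2$ for $H(2r,q)$, $2$ for $Q^-(2r+1,q)$). A degenerate hyperplane of $\mathcal{P}$ is a hyperplane $H$ of $V(n,q)$ of the form $H=P^\perp$ for a point (1-space) $P$ of $\mathcal{P}$, i.e. a tangent hyperplane; then $H\cap\mathcal{P}$ is a cone with vertex $P$ over a polar space of the same type with rank $r-1$. *)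

theory Defs
  imports "HOL-Analysis.Analysis"
begin

text \<open>Vectors of V(n,q) are elements of type 'a^'n with 'a a finite field (q = CARD('a))
 and n = CARD('n). Subspaces and (vector) dimension are those of the library
 interpretation vec of vector_space for scalar multiplication (*s).\<close>

definition field_automorphism :: "('a::field \<Rightarrow> 'a) \<Rightarrow> bool" where
  "field_automorphism \<sigma> \<longleftrightarrow> bij \<sigma> \<and> (\<forall>a b. \<sigma> (a + b) = \<sigma> a + \<sigma> b) \<and> (\<forall>a b. \<sigma> (a * b) = \<sigma> a * \<sigma> b)"

definition sesquilinear ::
  "('a::field \<Rightarrow> 'a) \<Rightarrow> ('a^'n \<Rightarrow> 'a^'n \<Rightarrow> 'a) \<Rightarrow> bool" where
  "sesquilinear \<sigma> B \<longleftrightarrow> field_automorphism \<sigma> \<and>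
     (\<forall>x y z. B (x + y) z = B x z + B y z) \<and>
     (\<forall>x y z. B x (y + z) = B x y + B x z) \<and>
     (\<forall>c x y. B (c *s x) y = c * B x y) \<and>
     (\<forall>c x y. B x (c *s y) = \<sigma> c * B x y)"

definition reflexive_form :: "('a::field^'n \<Rightarrow> 'a^'n \<Rightarrow> 'a) \<Rightarrow> bool" where
  "reflexive_form B \<longleftrightarrow> (\<forall>x y. B x y = 0 \<longleftrightarrow> B y x = 0)"

definition nondegenerate_form :: "('a::field^'n \<Rightarrow> 'a^'n \<Rightarrow> 'a) \<Rightarrow> bool" where
  "nondegenerate_form B \<longleftrightarrow> (\<forall>x. (\<forall>y. B x y = 0) \<longrightarrow> x = 0)"

text \<open>A form giving a classical polar space: non-degenerate reflexive sesquilinear,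
 excluding the non-classical case of a symmetric non-alternating bilinear form in
 characteristic 2 (whose isotropic vectors only form a hyperplane).\<close>
definition classical_sesquilinear_form :: "('a::field^'n \<Rightarrow> 'a^'n \<Rightarrow> 'a) \<Rightarrow> bool" where
  "classical_sesquilinear_form B \<longleftrightarrow>
     (\<exists>\<sigma>. sesquilinear \<sigma> B \<and>
        \<not> (\<sigma> = id \<and> (1 + 1 :: 'a) = 0 \<and> \<not> (\<forall>x. B x x = 0))) \<and>
     reflexive_form B \<and> nondegenerate_form B"

definition polar_form :: "('a::field^'n \<Rightarrow> 'a) \<Rightarrow> 'a^'n \<Rightarrow> 'a^'n \<Rightarrow> 'a" where
  "polar_form Q x y = Q (x + y) - Q x - Q y"

definition quadratic_form :: "('a::field^'n \<Rightarrow> 'a) \<Rightarrow> bool" where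
  "quadratic_form Q \<longleftrightarrow> (\<forall>c x. Q (c *s x) = c^2 * Q x) \<and> sesquilinear id (polar_form Q)"

definition nondegenerate_quadratic_form :: "('a::field^'n \<Rightarrow> 'a) \<Rightarrow> bool" where
  "nondegenerate_quadratic_form Q \<longleftrightarrow> quadratic_form Q \<and>
     (\<forall>x. Q x = 0 \<and> (\<forall>y. polar_form Q x y = 0) \<longrightarrow> x = 0)"

text \<open>A finite classical polar space is given by its associated (sesqui)bilinear form B
 (defining the polarity perp) and the predicate TI of being totally isotropic /
 totally singular for subsets of V.\<close>
definition classical_polar_space ::
  "('a::field^'n \<Rightarrow> 'a^'n \<Rightarrow> 'a) \<Rightarrow> (('a^'n) set \<Rightarrow> bool) \<Rightarrow> bool" where
  "classical_polar_space B TI \<longleftrightarrow>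
     (classical_sesquilinear_form B \<and> TI = (\<lambda>U. \<forall>u\<in>U. \<forall>v\<in>U. B u v = 0)) \<or>
     (\<exists>Q. nondegenerate_quadratic_form Q \<and> B = polar_form Q \<and> TI = (\<lambda>U. \<forall>u\<in>U. Q u = 0))"

definition k_spaces :: "(('a::field^'n) set \<Rightarrow> bool) \<Rightarrow> nat \<Rightarrow> ('a^'n) set set" where
  "k_spaces TI k = {U. vec.subspace U \<and> vec.dim U = k \<and> TI U}"

definition polar_rank :: "(('a::field^'n) set \<Rightarrow> bool) \<Rightarrow> nat \<Rightarrow> bool" where
  "polar_rank TI r \<longleftrightarrow> k_spaces TI r \<noteq> {} \<and>
     (\<forall>U. vec.subspace U \<and> TI U \<longrightarrow> vec.dim U \<le> r)"

definition polar_parameter ::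
  "(('a::{finite,field}^'n) set \<Rightarrow> bool) \<Rightarrow> nat \<Rightarrow> real \<Rightarrow> bool" where
  "polar_parameter TI r e \<longleftrightarrow>
     (\<forall>L \<in> k_spaces TI (r - 1).
        real (card {G \<in> k_spaces TI r. L \<subseteq> G}) = real CARD('a) powr e + 1)"

definition perp :: "('a::field^'n \<Rightarrow> 'a^'n \<Rightarrow> 'a) \<Rightarrow> ('a^'n) set \<Rightarrow> ('a^'n) set" where
  "perp B S = {x. \<forall>s\<in>S. B s x = 0}"

end

theory Submission
  imports Defs
begin

(* Let q = |F| and fix a generator M through a totally singular subspace Y of dimension j.
   A singular vector x of Y\<^sup>\<perp> outside M determines the hyperplane L = M \<inter> x\<^sup>\<perp> of M,
   which contains Y, and the generator G = \<langle>L, x\<rangle> \<noteq> M through L; conversely every vector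
   of G - L arises in this way. As each hyperplane of M lies in exactly q^e + 1 generators,
   Y\<^sup>\<perp> contains s(j) = q^r + q^(r+e-1) (q^(r-j) - 1) singular vectors, a number depending
   only on j. Hence ordered bases of totally singular i-spaces can be counted one vector at a
   time. Counting in the same way the ordered bases inside p\<^sup>\<perp>, for a singular point p, split
   according to whether p already lies in their span, gives a two-term linear recursion whose solution shows that they
   form the fraction (s(k) - 1) / (s(0) - 1) of all ordered bases of totally singular k-spaces.
   Every k-space has the same number of ordered bases, so the same fraction holds for k-spaces. *)

lemma two_le_card_field: "2 \<le> CARD('a::{finite,field})"
proof -
  have "card {0::'a, 1} = 2" by simp
  moreover have "card {0::'a, 1} \<le> CARD('a)" by (rule card_mono) simp_all
  ultimately show ?thesis by simp
qed

lemma card_span_insert: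
  fixes S :: "('a::{finite,field}^'n) set"
  assumes "x \<notin> vec.span S"
  shows "card (vec.span (insert x S)) = CARD('a) * card (vec.span S)"
proof -
  let ?f = "\<lambda>(c, y). c *s x + y"
  have span_eq: "vec.span (insert x S) = ?f ` (UNIV \<times> vec.span S)"
  proof (intro subset_antisym subsetI)
    fix z assume "z \<in> vec.span (insert x S)"
    then obtain c where "z - c *s x \<in> vec.span S" by (auto simp: vec.span_insert)
    then show "z \<in> ?f ` (UNIV \<times> vec.span S)" by (intro image_eqI[of _ _ "(c, z - c *s x)"]) auto
  next
    fix z assume "z \<in> ?f ` (UNIV \<times> vec.span S)"
    then obtain c y where "z = c *s x + y" "y \<in> vec.span S" by auto
    then show "z \<in> vec.span (insert x S)" unfolding vec.span_insert by (intro CollectI exI[of _ c]) simp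
  qed
  have "inj_on ?f (UNIV \<times> vec.span S)"
  proof (rule inj_onI, clarsimp)
    fix c y c' y'
    assume y: "y \<in> vec.span S" "y' \<in> vec.span S" and eq: "c *s x + y = c' *s x + y'"
    show "c = c' \<and> y = y'"
    proof (cases "c = c'")
      case True then show ?thesis using eq by simp
    next
      case False
      have "(c - c') *s x = y' - y" using eq by (simp add: algebra_simps)
      then have "x = inverse (c - c') *s (y' - y)" using False
        by (metis eq_iff_diff_eq_0 left_inverse vector_smult_assoc vector_smult_lid)
      then have "x \<in> vec.span S" using y by (simp add: vec.span_diff vec.span_scale)
      with assms show ?thesis by simp
    qed
  qed
  then show ?thesis unfolding span_eq by (simp add: card_image card_cartesian_product)
qed

lemma card_span: "card (vec.span S) = CARD('a) ^ vec.dim S"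
  for S :: "('a::{finite,field}^'n) set"
proof -
  have "finite S" by simp
  then show ?thesis
  proof (induction S rule: finite_induct)
    case (insert x S)
    then show ?case
      by (cases "x \<in> vec.span S") (simp_all add: vec.span_redundant vec.dim_insert card_span_insert)
  qed simp
qed

lemma card_span_insert_diff:
  fixes S :: "('a::{finite,field}^'n) set"
  assumes "x \<notin> vec.span S"
  shows "real (card (vec.span (insert x S) - vec.span S))
    = real CARD('a) ^ Suc (vec.dim S) - real CARD('a) ^ vec.dim S"
proof -
  have "vec.span S \<subseteq> vec.span (insert x S)" by (simp add: vec.span_mono subset_insertI)
  then show ?thesis
    using assms card_span[of "insert x S"] card_span[of S]
    by (simp add: vec.dim_insert card_Diff_subset card_mono of_nat_diff)
qed

lemma card_subspace: "vec.subspace U \<Longrightarrow> card U = CARD('a) ^ vec.dim U"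
  for U :: "('a::{finite,field}^'n) set"
  using card_span[of U] by (simp add: vec.span_eq_iff[THEN iffD2])

primrec independent_over :: "('a::field^'n) set \<Rightarrow> ('a^'n) list \<Rightarrow> bool" where
  "independent_over Y [] \<longleftrightarrow> True"
| "independent_over Y (v # vs) \<longleftrightarrow> independent_over Y vs \<and> v \<notin> vec.span (Y \<union> set vs)"

lemma dim_independent_over:
  "independent_over Y vs \<Longrightarrow> vec.dim (Y \<union> set vs) = vec.dim Y + length vs"
proof (induction vs)
  case (Cons v vs)
  have "Y \<union> set (v # vs) = insert v (Y \<union> set vs)" by auto
  then show ?case using Cons by (simp add: vec.dim_insert)
qed simp

lemma finite_lists_of_length:
  fixes A :: "('b::finite) list set"
  assumes "\<And>vs. vs \<in> A \<Longrightarrow> length vs = t"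
  shows "finite A"
proof (rule finite_subset)
  show "A \<subseteq> {vs. length vs = t}" using assms by auto
  show "finite {vs :: 'b list. length vs = t}"
    using finite_lists_length_eq[of "UNIV :: 'b set" t] by simp
qed

lemma card_Cons_recursion:
  fixes S T :: "('b::finite) list set"
  assumes "finite T" and "[] \<notin> S" and "\<And>v vs. v # vs \<in> S \<longleftrightarrow> vs \<in> T \<and> v \<in> X vs"
  shows "card S = (\<Sum>vs\<in>T. card (X vs))"
proof -
  have "S = (\<Union>vs\<in>T. (\<lambda>v. v # vs) ` X vs)"
  proof (intro subset_antisym subsetI)
    fix ws assume "ws \<in> S"
    with assms(2,3) show "ws \<in> (\<Union>vs\<in>T. (\<lambda>v. v # vs) ` X vs)" by (cases ws) auto
  qed (use assms(3) in auto)
  also have "card \<dots> = (\<Sum>vs\<in>T. card ((\<lambda>v. v # vs) ` X vs))"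
    by (rule card_UN_disjoint) (use assms(1) in auto)
  also have "\<dots> = (\<Sum>vs\<in>T. card (X vs))"
    by (rule sum.cong) (auto intro: card_image inj_onI)
  finally show ?thesis .
qed

definition extension_lists :: "('a::field^'n) set \<Rightarrow> ('a^'n) set \<Rightarrow> nat \<Rightarrow> ('a^'n) list set" where
  "extension_lists Y W t = {vs. length vs = t \<and> set vs \<subseteq> W \<and> independent_over Y vs}"

lemma card_extension_lists:
  fixes W Y :: "('a::{finite,field}^'n) set"
  assumes W: "vec.subspace W" and Y: "Y \<subseteq> W" and "vec.dim Y + t \<le> vec.dim W"
  shows "card (extension_lists Y W t) = (\<Prod>i<t. CARD('a) ^ vec.dim W - CARD('a) ^ (vec.dim Y + i))"
  using assms(3)
proof (induction t)
  case 0
  have "extension_lists Y W 0 = {[]}" by (auto simp: extension_lists_def)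
  then show ?case by simp
next
  case (Suc t)
  have card_step: "card (W - vec.span (Y \<union> set vs)) = CARD('a) ^ vec.dim W - CARD('a) ^ (vec.dim Y + t)"
    if "vs \<in> extension_lists Y W t" for vs
  proof -
    have "vec.span (Y \<union> set vs) \<subseteq> W"
      using that Y by (intro vec.span_minimal[OF _ W]) (auto simp: extension_lists_def)
    then show ?thesis
      using that card_subspace[OF W] card_span[of "Y \<union> set vs"] dim_independent_over[of Y vs]
      by (simp add: card_Diff_subset extension_lists_def)
  qed
  have "card (extension_lists Y W (Suc t))
      = (\<Sum>vs\<in>extension_lists Y W t. card (W - vec.span (Y \<union> set vs)))"
    by (rule card_Cons_recursion)
      (auto simp: extension_lists_def intro: finite_lists_of_length[of _ t])
  also have "\<dots> = card (extension_lists Y W t) * (CARD('a) ^ vec.dim W - CARD('a) ^ (vec.dim Y + t))"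
    using card_step by simp
  finally show ?case using Suc by simp
qed

lemma card_lists_spanning:
  fixes Y :: "('a::{finite,field}^'n) set" and \<L> :: "('a^'n) set set"
  assumes \<L>: "\<And>L. L \<in> \<L> \<Longrightarrow> vec.subspace L \<and> Y \<subseteq> L \<and> vec.dim L = vec.dim Y + t"
  shows "card {vs. length vs = t \<and> independent_over Y vs \<and> vec.span (Y \<union> set vs) \<in> \<L>}
    = card \<L> * (\<Prod>i<t. CARD('a) ^ (vec.dim Y + t) - CARD('a) ^ (vec.dim Y + i))"
proof -
  define S where "S = {vs. length vs = t \<and> independent_over Y vs \<and> vec.span (Y \<union> set vs) \<in> \<L>}"
  have fiber: "{vs \<in> S. vec.span (Y \<union> set vs) = L} = extension_lists Y L t" if "L \<in> \<L>" for L
  proof (intro subset_antisym subsetI)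
    fix vs assume "vs \<in> {vs \<in> S. vec.span (Y \<union> set vs) = L}"
    then show "vs \<in> extension_lists Y L t"
      using vec.span_superset[of "Y \<union> set vs"] by (auto simp: S_def extension_lists_def)
  next
    fix vs assume vs: "vs \<in> extension_lists Y L t"
    have L: "vec.subspace L" "Y \<subseteq> L" "vec.dim L = vec.dim Y + t" using \<L> that by auto
    have "vec.span (Y \<union> set vs) = L"
    proof (rule vec.subspace_dim_equal)
      show "vec.span (Y \<union> set vs) \<subseteq> L"
        using vs L by (intro vec.span_minimal) (auto simp: extension_lists_def)
      show "vec.dim L \<le> vec.dim (vec.span (Y \<union> set vs))"
        using vs L dim_independent_over[of Y vs] by (simp add: extension_lists_def)
    qed (use L in auto)
    then show "vs \<in> {vs \<in> S. vec.span (Y \<union> set vs) = L}"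
      using vs that by (auto simp: S_def extension_lists_def)
  qed
  have "finite S" by (rule finite_lists_of_length) (auto simp: S_def)
  moreover have "(\<lambda>vs. vec.span (Y \<union> set vs)) ` S \<subseteq> \<L>" by (auto simp: S_def)
  ultimately have "card S = (\<Sum>L\<in>\<L>. card {vs \<in> S. vec.span (Y \<union> set vs) = L})"
    using sum.group[of S \<L> "\<lambda>vs. vec.span (Y \<union> set vs)" "\<lambda>_. 1::nat"] by simp
  also have "\<dots> = (\<Sum>L\<in>\<L>. \<Prod>i<t. CARD('a) ^ (vec.dim Y + t) - CARD('a) ^ (vec.dim Y + i))"
    using \<L> by (intro sum.cong) (auto simp: fiber card_extension_lists)
  finally show ?thesis by (simp add: S_def)
qed

lemma prod_power_diff_Suc:
  fixes q :: "'a::comm_ring_1"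
  shows "(\<Prod>i<t. q ^ (j + t + 1) - q ^ (j + i)) * (q - 1)
       = (q ^ (t + 1) - 1) * (\<Prod>i<t. q ^ (j + t) - q ^ (j + i))"
proof (induction t arbitrary: j)
  case (Suc t)
  have IH: "(\<Prod>i<t. q ^ (Suc j + t + 1) - q ^ (Suc j + i)) * (q - 1)
      = (q ^ (t + 1) - 1) * (\<Prod>i<t. q ^ (Suc j + t) - q ^ (Suc j + i))"
    by (rule Suc.IH)
  have "(\<Prod>i<Suc t. q ^ (j + Suc t + 1) - q ^ (j + i)) * (q - 1)
      = (q ^ (j + t + 2) - q ^ j) * ((\<Prod>i<t. q ^ (Suc j + t + 1) - q ^ (Suc j + i)) * (q - 1))"
    by (simp add: prod.lessThan_Suc_shift ac_simps del: prod.lessThan_Suc)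
  also have "\<dots> = (q ^ (j + t + 2) - q ^ j) * (q ^ (t + 1) - 1) * (\<Prod>i<t. q ^ (Suc j + t) - q ^ (Suc j + i))"
    by (simp only: IH mult.assoc)
  also have "(q ^ (j + t + 2) - q ^ j) * (q ^ (t + 1) - 1) = (q ^ (Suc t + 1) - 1) * (q ^ (j + Suc t) - q ^ j)"
    by (simp add: algebra_simps power_add)
  also have "\<dots> * (\<Prod>i<t. q ^ (Suc j + t) - q ^ (Suc j + i))
      = (q ^ (Suc t + 1) - 1) * (\<Prod>i<Suc t. q ^ (j + Suc t) - q ^ (j + i))"
    by (simp add: prod.lessThan_Suc_shift ac_simps del: prod.lessThan_Suc)
  finally show ?case .
qed simp

definition hyperplanes_containing :: "('a::field^'n) set \<Rightarrow> ('a^'n) set \<Rightarrow> ('a^'n) set set" where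
  "hyperplanes_containing W Y = {L. vec.subspace L \<and> vec.dim L = vec.dim W - 1 \<and> Y \<subseteq> L \<and> L \<subseteq> W}"

lemma extension_lists_spanning_hyperplanes:
  fixes W Y :: "('a::{finite,field}^'n) set"
  assumes W: "vec.subspace W" and Y: "Y \<subseteq> W" and dim: "vec.dim W = vec.dim Y + t + 1"
  shows "extension_lists Y W t = {vs. length vs = t \<and> independent_over Y vs
    \<and> vec.span (Y \<union> set vs) \<in> hyperplanes_containing W Y}"
proof (intro subset_antisym subsetI)
  fix vs assume vs: "vs \<in> extension_lists Y W t"
  have "vec.span (Y \<union> set vs) \<subseteq> W"
    using vs Y by (intro vec.span_minimal[OF _ W]) (auto simp: extension_lists_def)
  then show "vs \<in> {vs. length vs = t \<and> independent_over Y vs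
      \<and> vec.span (Y \<union> set vs) \<in> hyperplanes_containing W Y}"
    using vs dim_independent_over[of Y vs] dim vec.span_superset[of "Y \<union> set vs"]
    by (auto simp: extension_lists_def hyperplanes_containing_def)
next
  fix vs assume "vs \<in> {vs. length vs = t \<and> independent_over Y vs
      \<and> vec.span (Y \<union> set vs) \<in> hyperplanes_containing W Y}"
  then show "vs \<in> extension_lists Y W t"
    using vec.span_superset[of "Y \<union> set vs"] by (auto simp: extension_lists_def hyperplanes_containing_def)
qed

lemma of_nat_prod_power_diff:
  assumes "1 \<le> q" and "j + t \<le> m"
  shows "real (\<Prod>i<t. q ^ m - q ^ (j + i)) = (\<Prod>i<t. real q ^ m - real q ^ (j + i))"
  using assms by (auto simp: of_nat_prod of_nat_diff power_increasing intro!: prod.cong)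

lemma card_hyperplanes_containing:
  fixes W Y :: "('a::{finite,field}^'n) set"
  assumes W: "vec.subspace W" "0 < vec.dim W" and Y: "Y \<subseteq> W"
  shows "real (card (hyperplanes_containing W Y)) * (real CARD('a) - 1)
    = real CARD('a) ^ (vec.dim W - vec.dim Y) - 1"
proof (cases "vec.dim Y = vec.dim W")
  case True
  have "vec.dim Y \<le> vec.dim L" if "L \<in> hyperplanes_containing W Y" for L
    by (rule vec.dim_subset) (use that in \<open>simp add: hyperplanes_containing_def\<close>)
  then have "hyperplanes_containing W Y = {}"
    using True W(2) by (fastforce simp: hyperplanes_containing_def)
  then show ?thesis using True by simp
next
  case False
  define q where "q = CARD('a)"
  define j where "j = vec.dim Y"
  define t where "t = vec.dim W - 1 - j"
  have "j \<le> vec.dim W" unfolding j_def using Y vec.dim_subset by blast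
  with False have dim_W: "vec.dim W = j + t + 1" by (simp add: j_def t_def)
  have q2: "2 \<le> q" unfolding q_def by (rule two_le_card_field)
  have count: "(\<Prod>i<t. q ^ (j + t + 1) - q ^ (j + i))
      = card (hyperplanes_containing W Y) * (\<Prod>i<t. q ^ (j + t) - q ^ (j + i))"
    using card_extension_lists[OF W(1) Y, of t] dim_W
      extension_lists_spanning_hyperplanes[OF W(1) Y, of t]
      card_lists_spanning[of "hyperplanes_containing W Y" Y t]
    by (simp add: hyperplanes_containing_def j_def q_def)
  define P where "P = (\<Prod>i<t. real q ^ (j + t) - real q ^ (j + i))"
  have "(\<Prod>i<t. real q ^ (j + t + 1) - real q ^ (j + i)) = real (\<Prod>i<t. q ^ (j + t + 1) - q ^ (j + i))"
    by (rule of_nat_prod_power_diff[symmetric]) (use q2 in auto)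
  also have "\<dots> = card (hyperplanes_containing W Y) * real (\<Prod>i<t. q ^ (j + t) - q ^ (j + i))"
    unfolding count by simp
  also have "real (\<Prod>i<t. q ^ (j + t) - q ^ (j + i)) = P"
    unfolding P_def by (rule of_nat_prod_power_diff) (use q2 in auto)
  finally have "(\<Prod>i<t. real q ^ (j + t + 1) - real q ^ (j + i)) = card (hyperplanes_containing W Y) * P" .
  then have "card (hyperplanes_containing W Y) * (real q - 1) * P = (real q ^ (t + 1) - 1) * P"
    using prod_power_diff_Suc[of "real q" j t] by (simp add: P_def algebra_simps)
  moreover have "P > 0"
    unfolding P_def using q2 by (intro prod_pos) (simp add: power_strict_increasing)
  ultimately have "card (hyperplanes_containing W Y) * (real q - 1) = real q ^ (t + 1) - 1"
    by simp
  then show ?thesis using dim_W by (simp add: q_def j_def)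
qed

text \<open>The predicate \<open>singular\<close> abstracts both isotropy \<open>B x x = 0\<close> for a sesquilinear form and
  \<open>Q x = 0\<close> for a quadratic form with polar form \<open>B\<close>. Linearity of \<open>B\<close> in the first argument
  suffices because perpendicularity is symmetric.\<close>

locale polar_structure =
  fixes B :: "'a::{finite,field}^'n \<Rightarrow> 'a^'n \<Rightarrow> 'a" and singular :: "'a^'n \<Rightarrow> bool"
  assumes B_add_left: "B (x + y) z = B x z + B y z"
    and B_scale_left: "B (c *s x) y = c * B x y"
    and B_eq_0_commute: "B x y = 0 \<longleftrightarrow> B y x = 0"
    and singular_0: "singular 0"
    and singular_add: "singular x \<Longrightarrow> singular y \<Longrightarrow> B x y = 0 \<Longrightarrow> singular (x + y)"
    and singular_scale: "singular x \<Longrightarrow> singular (c *s x)"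
    and singular_imp_B_self: "singular x \<Longrightarrow> B x x = 0"
begin

definition totally_singular :: "('a^'n) set \<Rightarrow> bool" where
  "totally_singular U \<longleftrightarrow> (\<forall>u\<in>U. singular u) \<and> (\<forall>u\<in>U. \<forall>v\<in>U. B u v = 0)"

definition singular_perp :: "('a^'n) set \<Rightarrow> ('a^'n) set" where
  "singular_perp Y = {x. singular x \<and> x \<in> perp B Y}"

lemma B_0_left [simp]: "B 0 y = 0"
  using B_scale_left[of 0 0 y] by simp

lemma B_diff_left: "B (x - y) z = B x z - B y z"
  using B_add_left[of "x - y" y z] by (simp add: algebra_simps)

lemma perp_eq: "perp B S = {x. \<forall>s\<in>S. B x s = 0}"
  unfolding perp_def using B_eq_0_commute by blast

lemma subspace_perp: "vec.subspace (perp B S)"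
  unfolding perp_eq vec.subspace_def by (auto simp: B_add_left B_scale_left)

lemma perp_insert: "perp B (insert a S) = perp B {a} \<inter> perp B S"
  unfolding perp_def by auto

lemma perp_span: "perp B (vec.span S) = perp B S"
proof (intro subset_antisym subsetI)
  fix x assume "x \<in> perp B S"
  then have "S \<subseteq> perp B {x}" unfolding perp_def using B_eq_0_commute by blast
  then have "vec.span S \<subseteq> perp B {x}" using subspace_perp by (rule vec.span_minimal)
  then show "x \<in> perp B (vec.span S)" unfolding perp_def using B_eq_0_commute by blast
qed (auto simp: perp_def intro: vec.span_base)

lemma totally_singular_insert:
  "totally_singular (insert v S) \<longleftrightarrow> totally_singular S \<and> singular v \<and> v \<in> perp B S"
  unfolding totally_singular_def perp_def using singular_imp_B_self B_eq_0_commute by auto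

lemma totally_singular_subset: "totally_singular T \<Longrightarrow> S \<subseteq> T \<Longrightarrow> totally_singular S"
  unfolding totally_singular_def by blast

lemma totally_singular_span: "totally_singular (vec.span S) \<longleftrightarrow> totally_singular S"
proof
  assume S: "totally_singular S"
  have "vec.span S \<subseteq> perp B (vec.span S)"
    unfolding perp_span using S subspace_perp
    by (intro vec.span_minimal) (auto simp: totally_singular_def perp_def)
  then have orth: "B u v = 0" if "u \<in> vec.span S" "v \<in> vec.span S" for u v
    using that by (auto simp: perp_def)
  have "vec.subspace {x \<in> vec.span S. singular x}"
    unfolding vec.subspace_def
    using orth by (auto intro: singular_add singular_scale
      simp: singular_0 vec.span_add vec.span_scale vec.span_zero)
  then have "vec.span S \<subseteq> {x \<in> vec.span S. singular x}"
    using S vec.span_base by (intro vec.span_minimal) (auto simp: totally_singular_def)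
  then show "totally_singular (vec.span S)" using orth by (auto simp: totally_singular_def)
qed (rule totally_singular_subset[OF _ vec.span_superset])

lemma subset_singular_perp: "totally_singular U \<Longrightarrow> U \<subseteq> singular_perp U"
  unfolding singular_perp_def totally_singular_def perp_def by auto

lemma singular_perp_span: "singular_perp (vec.span S) = singular_perp S"
  unfolding singular_perp_def perp_span ..

lemma singular_perp_insert: "singular_perp (insert a S) = singular_perp S \<inter> perp B {a}"
  unfolding singular_perp_def perp_insert[of a S] by blast

lemma dim_le_dim_inter_perp_Suc:
  assumes W: "vec.subspace W"
  shows "vec.dim W \<le> vec.dim (W \<inter> perp B {c}) + 1"
proof (cases "W \<subseteq> perp B {c}")
  case True
  then show ?thesis by (simp add: Int_absorb2)
next
  case False
  then obtain w where w: "w \<in> W" "B w c \<noteq> 0" by (auto simp: perp_eq)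
  define K where "K = W \<inter> perp B {c}"
  have "x \<in> vec.span (insert w K)" if x: "x \<in> W" for x
  proof -
    define t where "t = B x c / B w c"
    have "x - t *s w \<in> K"
      using x w W subspace_perp
      by (auto simp: K_def perp_eq B_diff_left B_scale_left t_def vec.subspace_diff vec.subspace_scale)
    then have "x - t *s w \<in> vec.span (insert w K)" by (simp add: vec.span_base)
    moreover have "t *s w \<in> vec.span (insert w K)" by (simp add: vec.span_base vec.span_scale)
    ultimately show ?thesis using vec.span_add[of "x - t *s w" _ "t *s w"] by simp
  qed
  then have "vec.dim W \<le> vec.dim (vec.span (insert w K))" by (intro vec.dim_subset) blast
  also have "\<dots> \<le> vec.dim K + 1" by (simp add: vec.dim_insert)
  finally show ?thesis unfolding K_def .
qed

lemma dim_le_dim_inter_perp_card: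
  assumes "vec.subspace W" and "finite C"
  shows "vec.dim W \<le> vec.dim (W \<inter> perp B C) + card C"
  using assms(2)
proof (induction C rule: finite_induct)
  case (insert a C)
  have "vec.dim (W \<inter> perp B C) \<le> vec.dim (W \<inter> perp B C \<inter> perp B {a}) + 1"
    using assms(1) subspace_perp by (intro dim_le_dim_inter_perp_Suc vec.subspace_inter)
  moreover have "W \<inter> perp B C \<inter> perp B {a} = W \<inter> perp B (insert a C)"
    using perp_insert by blast
  ultimately show ?case using insert by simp
qed (simp add: perp_def)

lemma dim_inter_perp_ge:
  assumes G: "vec.subspace G" "totally_singular G" and M: "vec.subspace M"
  shows "vec.dim G + vec.dim (G \<inter> M) \<le> vec.dim (G \<inter> perp B M) + vec.dim M"
proof -
  obtain BD where BD: "BD \<subseteq> G \<inter> M" "vec.independent BD" "G \<inter> M \<subseteq> vec.span BD"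
    "card BD = vec.dim (G \<inter> M)"
    using vec.basis_exists by blast
  then obtain BM where BM: "BD \<subseteq> BM" "BM \<subseteq> M" "vec.independent BM" "M \<subseteq> vec.span BM"
    using vec.maximal_independent_subset_extend[of BD M] by blast
  have span_BM: "vec.span BM = M"
    using BM M by (metis subset_antisym vec.span_eq_iff vec.span_mono)
  have card_BM: "card BM = vec.dim M"
    using BM(3) span_BM by (metis vec.dim_span vec.dim_eq_card_independent)
  define C where "C = BM - BD"
  \<comment> \<open>\<open>G\<close> is already perpendicular to \<open>BD \<subseteq> G\<close>, so only the \<open>card C\<close> new basis vectors of \<open>M\<close> cut
      down the dimension of \<open>G\<close>.\<close>
  have "G \<subseteq> perp B BD"
    using BD(1) G(2) by (auto simp: totally_singular_def perp_def)
  moreover have "perp B BD \<inter> perp B C = perp B M"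
    using BM(1) unfolding span_BM[symmetric] perp_span by (auto simp: perp_def C_def)
  ultimately have "G \<inter> perp B C \<subseteq> G \<inter> perp B M" by blast
  then have "vec.dim (G \<inter> perp B C) \<le> vec.dim (G \<inter> perp B M)" by (rule vec.dim_subset)
  moreover have "vec.dim G \<le> vec.dim (G \<inter> perp B C) + card C"
    using G(1) by (rule dim_le_dim_inter_perp_card) simp
  moreover have "card C = vec.dim M - vec.dim (G \<inter> M)"
    using BM(1) BD(4) card_BM by (simp add: C_def card_Diff_subset)
  moreover have "vec.dim (G \<inter> M) \<le> vec.dim M" by (simp add: vec.dim_subset)
  ultimately show ?thesis by linarith
qed

lemma k_spaces_1_singular_point:
  assumes "P \<in> k_spaces totally_singular 1"
  obtains p where "singular p" "p \<noteq> 0" "P = vec.span {p}"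
proof -
  have P: "vec.subspace P" "vec.dim P = 1" "totally_singular P"
    using assms by (auto simp: k_spaces_def)
  obtain S where S: "S \<subseteq> P" "vec.independent S" "P \<subseteq> vec.span S" "card S = vec.dim P"
    using vec.basis_exists by blast
  have "card S = 1" using S(4) P(2) by simp
  then obtain p where p: "S = {p}" by (rule card_1_singletonE)
  have "p \<noteq> 0" using S(2) vec.dependent_zero[of S] p by blast
  moreover have "singular p" using S(1) P(3) p by (auto simp: totally_singular_def)
  moreover have "P = vec.span {p}" using S(3) vec.span_minimal[OF S(1) P(1)] p by blast
  ultimately show ?thesis using that by blast
qed

definition singular_bases :: "nat \<Rightarrow> ('a^'n) list set" where
  "singular_bases i
    = {vs. length vs = i \<and> independent_over {} vs \<and> totally_singular (vec.span (set vs))}"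

lemma Cons_mem_singular_bases:
  "v # vs \<in> singular_bases (Suc i)
    \<longleftrightarrow> vs \<in> singular_bases i \<and> v \<in> singular_perp (vec.span (set vs)) - vec.span (set vs)"
  by (auto simp: singular_bases_def singular_perp_def totally_singular_insert totally_singular_span perp_span)

lemma finite_singular_bases: "finite (singular_bases i)"
  by (rule finite_lists_of_length) (auto simp: singular_bases_def)

lemma dim_singular_bases: "vs \<in> singular_bases i \<Longrightarrow> vec.dim (set vs) = i"
  using dim_independent_over[of "{}" vs] by (simp add: singular_bases_def)

lemma card_singular_bases_within:
  assumes "vec.subspace H"
  shows "card {vs \<in> singular_bases k. set vs \<subseteq> H}
    = card {U \<in> k_spaces totally_singular k. U \<subseteq> H} * (\<Prod>i<k. CARD('a) ^ k - CARD('a) ^ i)"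
proof -
  have "{vs \<in> singular_bases k. set vs \<subseteq> H} = {vs. length vs = k \<and> independent_over {} vs
      \<and> vec.span ({} \<union> set vs) \<in> {U \<in> k_spaces totally_singular k. U \<subseteq> H}}"
    using assms dim_independent_over[of "{}"] vec.span_superset vec.span_minimal
    by (auto simp: singular_bases_def k_spaces_def) blast+
  then show ?thesis
    using card_lists_spanning[of "{U \<in> k_spaces totally_singular k. U \<subseteq> H}" "{}" k]
    by (simp add: k_spaces_def)
qed

end

locale polar_structure_rank = polar_structure +
  fixes r :: nat
  assumes rank: "polar_rank totally_singular r"
begin

abbreviation generators where
  "generators \<equiv> k_spaces totally_singular r"

lemma generatorD: "M \<in> generators \<Longrightarrow> vec.subspace M \<and> vec.dim M = r \<and> totally_singular M"
  by (simp add: k_spaces_def)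

lemma dim_le_rank: "vec.subspace U \<Longrightarrow> totally_singular U \<Longrightarrow> vec.dim U \<le> r"
  using rank unfolding polar_rank_def by blast

lemma exists_singular_perp_outside:
  assumes M: "vec.subspace M" "totally_singular M" "vec.dim M < r"
  shows "\<exists>x. singular x \<and> x \<in> perp B M \<and> x \<notin> M"
proof -
  obtain G where "G \<in> generators" using rank unfolding polar_rank_def by blast
  then have G: "vec.subspace G" "totally_singular G" "vec.dim G = r" by (auto simp: k_spaces_def)
  have "vec.dim (G \<inter> M) < vec.dim (G \<inter> perp B M)"
    using dim_inter_perp_ge[OF G(1,2) M(1)] G(3) M(3) by linarith
  then have "\<not> G \<inter> perp B M \<subseteq> G \<inter> M"
    using vec.dim_subset leD by blast
  then obtain x where "x \<in> G" "x \<in> perp B M" "x \<notin> M" by blast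
  then show ?thesis using G(2) by (auto simp: totally_singular_def)
qed

lemma exists_generator_superset:
  assumes "vec.subspace Y" "totally_singular Y"
  shows "\<exists>M\<in>generators. Y \<subseteq> M"
  using assms
proof (induction "r - vec.dim Y" arbitrary: Y rule: less_induct)
  case less
  show ?case
  proof (cases "vec.dim Y < r")
    case False
    then show ?thesis using less.prems dim_le_rank[OF less.prems] by (auto simp: k_spaces_def)
  next
    case True
    then obtain x where x: "singular x" "x \<in> perp B Y" "x \<notin> Y"
      using exists_singular_perp_outside less.prems by blast
    define Y' where "Y' = vec.span (insert x Y)"
    have "x \<notin> vec.span Y" using x less.prems by (simp add: vec.span_eq_iff[THEN iffD2])
    then have "vec.dim Y' = vec.dim Y + 1" unfolding Y'_def by (simp add: vec.dim_insert)
    moreover have "totally_singular Y'"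
      unfolding Y'_def totally_singular_span totally_singular_insert using x less.prems by blast
    ultimately obtain M where "M \<in> generators" "Y' \<subseteq> M"
      using less.hyps[of Y'] True unfolding Y'_def by force
    moreover have "Y \<subseteq> Y'" unfolding Y'_def using vec.span_superset by blast
    ultimately show ?thesis by blast
  qed
qed

lemma singular_perp_generator_subset:
  assumes "M \<in> generators"
  shows "singular_perp M \<subseteq> M"
proof
  fix x assume x: "x \<in> singular_perp M"
  show "x \<in> M"
  proof (rule ccontr)
    assume "x \<notin> M"
    have M: "vec.subspace M" "vec.dim M = r" "totally_singular M"
      using assms by (auto simp: k_spaces_def)
    then have "x \<notin> vec.span M" using \<open>x \<notin> M\<close> by (simp add: vec.span_eq_iff[THEN iffD2])
    then have "vec.dim (vec.span (insert x M)) = r + 1" using M by (simp add: vec.dim_insert)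
    moreover have "totally_singular (vec.span (insert x M))"
      using x M unfolding totally_singular_span totally_singular_insert singular_perp_def by blast
    ultimately show False using dim_le_rank[of "vec.span (insert x M)"] by simp
  qed
qed

end

locale polar_structure_param = polar_structure_rank +
  fixes e :: real
  assumes parameter: "polar_parameter totally_singular r e" and rank_pos: "1 \<le> r"
begin

definition other_generators where
  "other_generators M L = {G \<in> generators. L \<subseteq> G \<and> G \<noteq> M}"

definition singular_perp_count :: "nat \<Rightarrow> real" where
  "singular_perp_count j = real CARD('a) ^ r
     + real CARD('a) powr e * real CARD('a) ^ (r - 1) * (real CARD('a) ^ (r - j) - 1)"

lemma singular_perp_count_powr:
  "singular_perp_count j
    = real CARD('a) ^ r + real CARD('a) powr (r + e - 1) * (real CARD('a) ^ (r - j) - 1)"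
proof -
  have "real r + e - 1 = e + real (r - 1)" using rank_pos by (simp add: of_nat_diff)
  then have "real CARD('a) powr (r + e - 1) = real CARD('a) powr e * real CARD('a) powr real (r - 1)"
    by (simp only: powr_add)
  also have "real CARD('a) powr real (r - 1) = real CARD('a) ^ (r - 1)"
    using two_le_card_field[where 'a='a] by (simp add: powr_realpow)
  finally show ?thesis by (simp add: singular_perp_count_def)
qed

lemma dim_generator_inter_perp:
  assumes M: "M \<in> generators" and x: "singular x" "x \<notin> M"
  shows "vec.subspace (M \<inter> perp B {x}) \<and> vec.dim (M \<inter> perp B {x}) = r - 1"
proof -
  let ?L = "M \<inter> perp B {x}"
  have L: "vec.subspace ?L" using generatorD[OF M] subspace_perp vec.subspace_inter by blast
  have "x \<notin> perp B M"
    using x singular_perp_generator_subset[OF M] by (auto simp: singular_perp_def)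
  then have "?L \<noteq> M" using B_eq_0_commute by (auto simp: perp_def)
  then have "vec.span ?L \<subset> vec.span M"
    using L generatorD[OF M] by (auto simp: vec.span_eq_iff[THEN iffD2])
  then have "vec.dim ?L < vec.dim M" by (rule vec.dim_psubset)
  then show ?thesis
    using L generatorD[OF M] dim_le_dim_inter_perp_Suc[of M x] by auto
qed

lemma other_generator_determined:
  assumes M: "M \<in> generators" and L: "L \<in> hyperplanes_containing M Y"
    and G: "G \<in> other_generators M L" and x: "x \<in> G" "x \<notin> L"
  shows "x \<notin> M \<and> L = M \<inter> perp B {x} \<and> G = vec.span (insert x L)"
proof -
  have M': "vec.subspace M" "vec.dim M = r" "totally_singular M" using generatorD[OF M] by auto
  have G': "vec.subspace G" "vec.dim G = r" "totally_singular G" "L \<subseteq> G" "G \<noteq> M"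
    using G by (auto simp: other_generators_def k_spaces_def)
  have L': "vec.subspace L" "vec.dim L = r - 1" "L \<subseteq> M"
    using L M'(2) by (auto simp: hyperplanes_containing_def)
  have "x \<notin> vec.span L" using x L' by (simp add: vec.span_eq_iff[THEN iffD2])
  then have dim_xL: "vec.dim (vec.span (insert x L)) = r" using L' rank_pos by (simp add: vec.dim_insert)
  have span_xL: "vec.span (insert x L) = W"
    if "vec.subspace W" "vec.dim W = r" "x \<in> W" "L \<subseteq> W" for W
    using that dim_xL by (intro vec.subspace_dim_equal vec.span_minimal) auto
  have G_eq: "G = vec.span (insert x L)" using span_xL[of G] G' x by simp
  have x_notin_M: "x \<notin> M" using span_xL[of M] M' L' G_eq G'(5) by auto
  have "L \<subseteq> M \<inter> perp B {x}" using L' G' x by (auto simp: totally_singular_def perp_eq)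
  moreover have "vec.subspace (M \<inter> perp B {x}) \<and> vec.dim (M \<inter> perp B {x}) = r - 1"
    using G' x by (intro dim_generator_inter_perp[OF M _ x_notin_M]) (auto simp: totally_singular_def)
  ultimately have "L = M \<inter> perp B {x}" using L' by (intro vec.subspace_dim_equal) auto
  then show ?thesis using x_notin_M G_eq by blast
qed

lemma other_generator_pieces_disjoint:
  assumes M: "M \<in> generators"
    and LG: "L \<in> hyperplanes_containing M Y" "G \<in> other_generators M L"
    and LG': "L' \<in> hyperplanes_containing M Y" "G' \<in> other_generators M L'"
    and "(L, G) \<noteq> (L', G')"
  shows "(G - L) \<inter> (G' - L') = {}"
proof (rule ccontr)
  assume "(G - L) \<inter> (G' - L') \<noteq> {}"
  then obtain x where "x \<in> G - L" "x \<in> G' - L'" by blast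
  then have "L = M \<inter> perp B {x} \<and> G = vec.span (insert x L)"
    and "L' = M \<inter> perp B {x} \<and> G' = vec.span (insert x L')"
    using other_generator_determined[OF M LG] other_generator_determined[OF M LG'] by blast+
  with assms(6) show False by simp
qed

lemma singular_perp_decomposition:
  assumes M: "M \<in> generators" and Y: "Y \<subseteq> M"
  shows "singular_perp Y
    = M \<union> (\<Union>(L, G) \<in> Sigma (hyperplanes_containing M Y) (other_generators M). G - L)"
proof (intro subset_antisym subsetI)
  have M': "vec.subspace M" "vec.dim M = r" "totally_singular M" using generatorD[OF M] by auto
  fix x assume x: "x \<in> singular_perp Y"
  show "x \<in> M \<union> (\<Union>(L, G) \<in> Sigma (hyperplanes_containing M Y) (other_generators M). G - L)"
  proof (cases "x \<in> M")
    case False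
    have x': "singular x" "x \<in> perp B Y" using x by (auto simp: singular_perp_def)
    define L where "L = M \<inter> perp B {x}"
    have L': "vec.subspace L" "vec.dim L = r - 1"
      using dim_generator_inter_perp[OF M x'(1) False] by (auto simp: L_def)
    have "Y \<subseteq> L" using Y x'(2) B_eq_0_commute by (auto simp: L_def perp_def)
    then have L: "L \<in> hyperplanes_containing M Y"
      using L' M'(2) by (auto simp: hyperplanes_containing_def L_def)
    define G where "G = vec.span (insert x L)"
    have "totally_singular L" using M'(3) totally_singular_subset L_def by blast
    moreover have "x \<in> perp B L" using B_eq_0_commute by (auto simp: L_def perp_def)
    ultimately have "totally_singular G"
      unfolding G_def totally_singular_span totally_singular_insert using x'(1) by blast
    moreover have "x \<notin> vec.span L" using False L' by (auto simp: L_def vec.span_eq_iff[THEN iffD2])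
    then have "vec.dim G = r" using L' rank_pos by (simp add: G_def vec.dim_insert)
    moreover have "x \<in> G" "L \<subseteq> G" using vec.span_superset[of "insert x L"] by (auto simp: G_def)
    ultimately have "G \<in> other_generators M L" "x \<in> G - L"
      using False by (auto simp: other_generators_def k_spaces_def G_def L_def)
    then show ?thesis using L by blast
  qed simp
next
  fix x assume "x \<in> M \<union> (\<Union>(L, G) \<in> Sigma (hyperplanes_containing M Y) (other_generators M). G - L)"
  then obtain G where "G \<in> generators" "Y \<subseteq> G" "x \<in> G"
  proof (elim UnE UN_E)
    fix LG assume LG: "LG \<in> Sigma (hyperplanes_containing M Y) (other_generators M)"
      "x \<in> (case LG of (L, G) \<Rightarrow> G - L)"
    obtain L G where "LG = (L, G)" by (cases LG)
    with LG have "Y \<subseteq> L" "L \<subseteq> G" "G \<in> generators" "x \<in> G"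
      by (auto simp: hyperplanes_containing_def other_generators_def)
    then show thesis using that by blast
  qed (use M Y in blast)
  then show "x \<in> singular_perp Y"
    by (auto simp: singular_perp_def perp_def totally_singular_def k_spaces_def)
qed

lemma card_other_generators:
  assumes M: "M \<in> generators" and L: "L \<in> hyperplanes_containing M Y"
  shows "real (card (other_generators M L)) = real CARD('a) powr e"
proof -
  have "L \<in> k_spaces totally_singular (r - 1)"
    using L generatorD[OF M] totally_singular_subset
    by (auto simp: hyperplanes_containing_def k_spaces_def)
  then have count: "real (card {G \<in> generators. L \<subseteq> G}) = real CARD('a) powr e + 1"
    using parameter by (simp add: polar_parameter_def)
  have "M \<in> {G \<in> generators. L \<subseteq> G}" using M L by (auto simp: hyperplanes_containing_def)
  moreover have "other_generators M L = {G \<in> generators. L \<subseteq> G} - {M}"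
    by (auto simp: other_generators_def)
  ultimately have "card (other_generators M L) = card {G \<in> generators. L \<subseteq> G} - 1"
    and "1 \<le> card {G \<in> generators. L \<subseteq> G}"
    by (auto simp: Suc_le_eq card_gt_0_iff)
  then show ?thesis using count by (simp add: of_nat_diff)
qed

lemma card_singular_perp_generator:
  assumes M: "M \<in> generators" and Y: "Y \<subseteq> M"
  shows "real (card (singular_perp Y)) = real CARD('a) ^ r + real (card (hyperplanes_containing M Y))
    * real CARD('a) powr e * (real CARD('a) ^ r - real CARD('a) ^ (r - 1))"
proof -
  let ?\<Sigma> = "Sigma (hyperplanes_containing M Y) (other_generators M)"
  have M': "vec.subspace M" "vec.dim M = r" using generatorD[OF M] by auto
  have disjoint_M: "M \<inter> (\<Union>(L, G) \<in> ?\<Sigma>. G - L) = {}"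
    using other_generator_determined[OF M] by fast
  have card_piece: "card ((\<lambda>(L, G). G - L) p) = CARD('a) ^ r - CARD('a) ^ (r - 1)"
    if "p \<in> ?\<Sigma>" for p
  proof -
    obtain L G where p: "p = (L, G)" by (cases p)
    have "vec.subspace L" "vec.dim L = r - 1" "L \<subseteq> G" "vec.subspace G" "vec.dim G = r"
      using that M'(2) by (auto simp: p hyperplanes_containing_def other_generators_def k_spaces_def)
    then show ?thesis by (simp add: p card_Diff_subset card_subspace)
  qed
  have "card (singular_perp Y) = card M + card (\<Union>(L, G) \<in> ?\<Sigma>. G - L)"
    unfolding singular_perp_decomposition[OF M Y] using disjoint_M by (simp add: card_Un_disjoint)
  also have "card (\<Union>(L, G) \<in> ?\<Sigma>. G - L) = (\<Sum>p \<in> ?\<Sigma>. card ((\<lambda>(L, G). G - L) p))"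
  proof (rule card_UN_disjoint)
    show "\<forall>a\<in>?\<Sigma>. \<forall>b\<in>?\<Sigma>. a \<noteq> b \<longrightarrow> (\<lambda>(L, G). G - L) a \<inter> (\<lambda>(L, G). G - L) b = {}"
      using other_generator_pieces_disjoint[OF M] by fastforce
  qed simp_all
  also have "\<dots> = card ?\<Sigma> * (CARD('a) ^ r - CARD('a) ^ (r - 1))"
    by (simp only: sum.cong[OF refl card_piece] sum_constant of_nat_id)
  also have "card ?\<Sigma> = (\<Sum>L \<in> hyperplanes_containing M Y. card (other_generators M L))"
    by simp
  finally have "real (card (singular_perp Y)) = real (card M)
      + (\<Sum>L \<in> hyperplanes_containing M Y. real (card (other_generators M L)))
        * real (CARD('a) ^ r - CARD('a) ^ (r - 1))"
    by simp
  also have "(\<Sum>L \<in> hyperplanes_containing M Y. real (card (other_generators M L)))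
      = real (card (hyperplanes_containing M Y)) * real CARD('a) powr e"
    using card_other_generators[OF M] by simp
  finally show ?thesis
    using two_le_card_field[where 'a='a] M'
    by (simp add: card_subspace of_nat_diff power_increasing)
qed

lemma card_singular_perp:
  assumes "totally_singular Y"
  shows "real (card (singular_perp Y)) = singular_perp_count (vec.dim Y)"
proof -
  obtain M where M: "M \<in> generators" "vec.span Y \<subseteq> M"
    using exists_generator_superset[of "vec.span Y"] assms totally_singular_span by auto
  then have Y: "Y \<subseteq> M" using vec.span_superset by blast
  define q where "q = real CARD('a)"
  define N where "N = real (card (hyperplanes_containing M Y))"
  have "r = Suc (r - 1)" using rank_pos by simp
  then have "q ^ r - q ^ (r - 1) = q ^ (r - 1) * (q - 1)"
    by (metis power_Suc right_diff_distrib' mult.commute mult_1_right)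
  then have "N * q powr e * (q ^ r - q ^ (r - 1)) = q powr e * q ^ (r - 1) * (N * (q - 1))"
    by (simp add: ac_simps)
  also have "N * (q - 1) = q ^ (r - vec.dim Y) - 1"
    using card_hyperplanes_containing[OF _ _ Y] generatorD[OF M(1)] rank_pos
    by (simp add: N_def q_def)
  finally show ?thesis
    unfolding card_singular_perp_generator[OF M(1) Y] singular_perp_count_def
    by (simp add: N_def q_def)
qed

lemma card_singular_perp_diff:
  assumes "vec.subspace U" "totally_singular U"
  shows "real (card (singular_perp U - U))
    = singular_perp_count (vec.dim U) - real CARD('a) ^ vec.dim U"
proof -
  have "U \<subseteq> singular_perp U" using assms(2) by (rule subset_singular_perp)
  then have "real (card (singular_perp U - U)) = real (card (singular_perp U)) - real (card U)"
    by (simp add: card_Diff_subset card_mono of_nat_diff)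
  then show ?thesis using assms card_singular_perp card_subspace by simp
qed

lemma card_singular_perp_diff_singular_bases:
  assumes "vs \<in> singular_bases i"
  shows "real (card (singular_perp (vec.span (set vs)) - vec.span (set vs)))
    = singular_perp_count i - real CARD('a) ^ i"
proof -
  have "totally_singular (vec.span (set vs))" using assms by (simp add: singular_bases_def)
  from card_singular_perp_diff[OF vec.subspace_span this] show ?thesis
    using dim_singular_bases[OF assms] by simp
qed

lemma card_singular_bases_Suc:
  "real (card (singular_bases (Suc i)))
    = real (card (singular_bases i)) * (singular_perp_count i - real CARD('a) ^ i)"
proof -
  have "card (singular_bases (Suc i))
      = (\<Sum>vs\<in>singular_bases i. card (singular_perp (vec.span (set vs)) - vec.span (set vs)))"
  proof (rule card_Cons_recursion)
    show "[] \<notin> singular_bases (Suc i)" by (simp add: singular_bases_def)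
  qed (simp_all add: finite_singular_bases Cons_mem_singular_bases)
  then show ?thesis by (simp add: card_singular_perp_diff_singular_bases)
qed

end

locale polar_structure_point = polar_structure_param +
  fixes p
  assumes singular_p: "singular p" and p_nonzero: "p \<noteq> 0"
begin

definition tangent_bases_with_p :: "nat \<Rightarrow> _" where
  "tangent_bases_with_p i
    = {vs \<in> singular_bases i. set vs \<subseteq> perp B {p} \<and> p \<in> vec.span (set vs)}"

definition tangent_bases_without_p :: "nat \<Rightarrow> _" where
  "tangent_bases_without_p i
    = {vs \<in> singular_bases i. set vs \<subseteq> perp B {p} \<and> p \<notin> vec.span (set vs)}"

lemma finite_tangent_bases: "finite (tangent_bases_with_p i)" "finite (tangent_bases_without_p i)"
  using finite_singular_bases
  by (auto simp: tangent_bases_with_p_def tangent_bases_without_p_def)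

lemma totally_singular_span_insert_p:
  assumes "vs \<in> singular_bases i" "set vs \<subseteq> perp B {p}"
  shows "totally_singular (vec.span (insert p (set vs)))"
proof -
  have "p \<in> perp B (set vs)" using assms(2) B_eq_0_commute by (auto simp: perp_def)
  then show ?thesis
    using assms(1) singular_p
    by (simp add: totally_singular_span totally_singular_insert singular_bases_def)
qed

lemma Cons_mem_tangent_bases_with_p:
  "v # vs \<in> tangent_bases_with_p (Suc i)
    \<longleftrightarrow> vs \<in> tangent_bases_with_p i \<and> v \<in> singular_perp (vec.span (set vs)) - vec.span (set vs)
      \<or> vs \<in> tangent_bases_without_p i \<and> v \<in> vec.span (insert p (set vs)) - vec.span (set vs)"
  (is "?lhs \<longleftrightarrow> ?rhs")
proof -
  let ?S = "set vs" and ?U = "vec.span (set vs)"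
  have lhs: "?lhs \<longleftrightarrow> vs \<in> singular_bases i \<and> ?S \<subseteq> perp B {p}
      \<and> v \<in> singular_perp ?U \<inter> perp B {p} - ?U \<and> p \<in> vec.span (insert v ?S)"
    by (auto simp: tangent_bases_with_p_def Cons_mem_singular_bases)
  show ?thesis
  proof (cases "p \<in> ?U")
    case True
    then have "singular_perp ?U \<subseteq> perp B {p}"
      by (auto simp: singular_perp_def perp_def)
    moreover have "p \<in> vec.span (insert v ?S)" using True vec.span_mono[of ?S] by blast
    ultimately show ?thesis
      using True unfolding lhs by (auto simp: tangent_bases_with_p_def tangent_bases_without_p_def)
  next
    case False
    show ?thesis
    proof
      assume ?lhs
      then have v: "v \<notin> ?U" "p \<in> vec.span (insert v ?S)" unfolding lhs by auto
      then have "v \<in> vec.span (insert p ?S)" using vec.in_span_insert False by blast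
      then show ?rhs
        using \<open>?lhs\<close> v False unfolding lhs by (auto simp: tangent_bases_without_p_def)
    next
      assume ?rhs
      with False have vs: "vs \<in> singular_bases i" "?S \<subseteq> perp B {p}"
        and v: "v \<in> vec.span (insert p ?S)" "v \<notin> ?U"
        by (auto simp: tangent_bases_with_p_def tangent_bases_without_p_def)
      have "vec.span (insert p ?S) \<subseteq> singular_perp (insert p ?S)"
        using subset_singular_perp[OF totally_singular_span_insert_p[OF vs]]
        by (simp add: singular_perp_span)
      then have "v \<in> singular_perp ?U \<inter> perp B {p}"
        using v(1) by (auto simp: singular_perp_insert singular_perp_span)
      moreover have "p \<in> vec.span (insert v ?S)" using vec.in_span_insert[OF v] .
      ultimately show ?lhs unfolding lhs using vs v by blast
    qed
  qed
qed

lemma Cons_mem_tangent_bases_without_p: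
  "v # vs \<in> tangent_bases_without_p (Suc i)
    \<longleftrightarrow> vs \<in> tangent_bases_without_p i
      \<and> v \<in> singular_perp (vec.span (insert p (set vs))) - vec.span (insert p (set vs))"
proof -
  let ?S = "set vs" and ?U = "vec.span (set vs)"
  have "v \<notin> vec.span (insert p ?S) \<and> p \<notin> ?U \<longleftrightarrow> v \<notin> ?U \<and> p \<notin> vec.span (insert v ?S)"
    using vec.in_span_insert[of v p ?S] vec.in_span_insert[of p v ?S]
      vec.span_mono[of ?S "insert p ?S"] vec.span_mono[of ?S "insert v ?S"]
    by blast
  then show ?thesis
    by (auto simp: tangent_bases_without_p_def Cons_mem_singular_bases singular_perp_span
        singular_perp_insert)
qed

lemma card_tangent_bases_with_p_Suc:
  "real (card (tangent_bases_with_p (Suc i)))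
    = real (card (tangent_bases_with_p i)) * (singular_perp_count i - real CARD('a) ^ i)
      + real (card (tangent_bases_without_p i)) * (real CARD('a) ^ Suc i - real CARD('a) ^ i)"
proof -
  define X where "X vs = (if p \<in> vec.span (set vs)
    then singular_perp (vec.span (set vs)) - vec.span (set vs)
    else vec.span (insert p (set vs)) - vec.span (set vs))" for vs
  have "real (card (tangent_bases_with_p (Suc i)))
      = real (\<Sum>vs \<in> tangent_bases_with_p i \<union> tangent_bases_without_p i. card (X vs))"
  proof (rule arg_cong[where f = real], rule card_Cons_recursion)
    show "[] \<notin> tangent_bases_with_p (Suc i)"
      by (simp add: tangent_bases_with_p_def singular_bases_def)
    show "v # vs \<in> tangent_bases_with_p (Suc i)
        \<longleftrightarrow> vs \<in> tangent_bases_with_p i \<union> tangent_bases_without_p i \<and> v \<in> X vs" for v vs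
      using Cons_mem_tangent_bases_with_p[of v vs i]
      by (auto simp: X_def tangent_bases_with_p_def tangent_bases_without_p_def)
  qed (simp add: finite_tangent_bases)
  also have "\<dots> = real (\<Sum>vs \<in> tangent_bases_with_p i. card (X vs))
      + real (\<Sum>vs \<in> tangent_bases_without_p i. card (X vs))"
    unfolding of_nat_add[symmetric] using finite_tangent_bases
    by (subst sum.union_disjoint) (auto simp: tangent_bases_with_p_def tangent_bases_without_p_def)
  also have "real (\<Sum>vs \<in> tangent_bases_with_p i. card (X vs))
      = (\<Sum>vs \<in> tangent_bases_with_p i. singular_perp_count i - real CARD('a) ^ i)"
    unfolding of_nat_sum
  proof (rule sum.cong)
    fix vs assume "vs \<in> tangent_bases_with_p i"
    then have "vs \<in> singular_bases i" "p \<in> vec.span (set vs)" by (auto simp: tangent_bases_with_p_def)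
    then show "real (card (X vs)) = singular_perp_count i - real CARD('a) ^ i"
      using card_singular_perp_diff_singular_bases by (simp add: X_def)
  qed simp
  also have "real (\<Sum>vs \<in> tangent_bases_without_p i. card (X vs))
      = (\<Sum>vs \<in> tangent_bases_without_p i. real CARD('a) ^ Suc i - real CARD('a) ^ i)"
    unfolding of_nat_sum
  proof (rule sum.cong)
    fix vs assume "vs \<in> tangent_bases_without_p i"
    then have "vs \<in> singular_bases i" "p \<notin> vec.span (set vs)"
      by (auto simp: tangent_bases_without_p_def)
    then show "real (card (X vs)) = real CARD('a) ^ Suc i - real CARD('a) ^ i"
      using card_span_insert_diff[of p "set vs"] dim_singular_bases by (simp add: X_def)
  qed simp
  finally show ?thesis by (simp add: mult.commute)
qed

lemma card_tangent_bases_without_p_Suc: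
  "real (card (tangent_bases_without_p (Suc i)))
    = real (card (tangent_bases_without_p i)) * (singular_perp_count (Suc i) - real CARD('a) ^ Suc i)"
proof -
  have "card (tangent_bases_without_p (Suc i))
      = (\<Sum>vs \<in> tangent_bases_without_p i.
          card (singular_perp (vec.span (insert p (set vs))) - vec.span (insert p (set vs))))"
  proof (rule card_Cons_recursion)
    show "[] \<notin> tangent_bases_without_p (Suc i)"
      by (simp add: tangent_bases_without_p_def singular_bases_def)
  qed (simp_all add: finite_tangent_bases Cons_mem_tangent_bases_without_p)
  then have "real (card (tangent_bases_without_p (Suc i)))
      = (\<Sum>vs \<in> tangent_bases_without_p i.
          real (card (singular_perp (vec.span (insert p (set vs))) - vec.span (insert p (set vs)))))"
    by simp
  also have "\<dots> = (\<Sum>vs \<in> tangent_bases_without_p i.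
      singular_perp_count (Suc i) - real CARD('a) ^ Suc i)"
  proof (rule sum.cong)
    fix vs assume "vs \<in> tangent_bases_without_p i"
    then have vs: "vs \<in> singular_bases i" "set vs \<subseteq> perp B {p}" "p \<notin> vec.span (set vs)"
      by (auto simp: tangent_bases_without_p_def)
    have "vec.dim (vec.span (insert p (set vs))) = Suc i"
      using vs(3) dim_singular_bases[OF vs(1)] by (simp add: vec.dim_insert)
    then show "real (card (singular_perp (vec.span (insert p (set vs))) - vec.span (insert p (set vs))))
        = singular_perp_count (Suc i) - real CARD('a) ^ Suc i"
      using card_singular_perp_diff[OF vec.subspace_span totally_singular_span_insert_p[OF vs(1,2)]]
      by simp
  qed simp
  finally show ?thesis by (simp add: mult.commute)
qed

lemma card_tangent_bases_invariants:
  "(singular_perp_count 0 - 1) * real (card (tangent_bases_with_p i))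
     = real (card (singular_bases i)) * (real CARD('a) ^ i - 1)
   \<and> (singular_perp_count 0 - 1) * real (card (tangent_bases_without_p i))
     = real (card (singular_bases i)) * (singular_perp_count i - real CARD('a) ^ i)"
proof (induction i)
  case 0
  have "totally_singular {}" by (simp add: totally_singular_def)
  then have "[] \<in> singular_bases 0" by (simp add: singular_bases_def totally_singular_span)
  moreover have "vs = []" if "vs \<in> singular_bases 0" for vs
    using that by (simp add: singular_bases_def)
  ultimately have "singular_bases 0 = {[]}" by blast
  moreover have "tangent_bases_with_p 0 = {}" "tangent_bases_without_p 0 = {[]}"
    unfolding tangent_bases_with_p_def tangent_bases_without_p_def \<open>singular_bases 0 = {[]}\<close>
    using p_nonzero by auto
  ultimately show ?case by simp
next
  case (Suc i)
  define c where "c = singular_perp_count 0 - 1"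
  define s where "s = singular_perp_count i"
  define q where "q = real CARD('a)"
  define a where "a = real (card (tangent_bases_with_p i))"
  define b where "b = real (card (tangent_bases_without_p i))"
  define n where "n = real (card (singular_bases i))"
  have IH: "c * a = n * (q ^ i - 1)" "c * b = n * (s - q ^ i)"
    using Suc.IH by (simp_all add: c_def s_def q_def a_def b_def n_def)
  have n_Suc: "real (card (singular_bases (Suc i))) = n * (s - q ^ i)"
    using card_singular_bases_Suc by (simp add: n_def s_def q_def)
  have "c * real (card (tangent_bases_with_p (Suc i)))
      = c * (a * (s - q ^ i) + b * (q ^ Suc i - q ^ i))"
    using card_tangent_bases_with_p_Suc[of i] by (simp add: a_def b_def s_def q_def)
  also have "\<dots> = (c * a) * (s - q ^ i) + (c * b) * (q ^ Suc i - q ^ i)"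
    by (simp add: algebra_simps)
  also have "\<dots> = n * (s - q ^ i) * (q ^ Suc i - 1)"
    unfolding IH by (simp add: algebra_simps)
  finally have with_p: "c * real (card (tangent_bases_with_p (Suc i)))
      = real (card (singular_bases (Suc i))) * (q ^ Suc i - 1)"
    unfolding n_Suc .
  have "c * real (card (tangent_bases_without_p (Suc i)))
      = (c * b) * (singular_perp_count (Suc i) - q ^ Suc i)"
    using card_tangent_bases_without_p_Suc by (simp add: b_def q_def)
  also have "\<dots> = real (card (singular_bases (Suc i))) * (singular_perp_count (Suc i) - q ^ Suc i)"
    unfolding IH n_Suc ..
  finally show ?case using with_p by (simp add: c_def q_def)
qed

lemma card_k_spaces_tangent_ratio:
  "(singular_perp_count 0 - 1) * real (card {U \<in> k_spaces totally_singular k. U \<subseteq> perp B {p}})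
    = real (card (k_spaces totally_singular k)) * (singular_perp_count k - 1)"
proof -
  define \<beta> where "\<beta> = (\<Prod>i<k. CARD('a) ^ k - CARD('a) ^ i)"
  have "\<beta> > 0"
    unfolding \<beta>_def using two_le_card_field[where 'a='a]
    by (intro prod_pos) (simp add: power_strict_increasing)
  have "{vs \<in> singular_bases k. set vs \<subseteq> perp B {p}}
      = tangent_bases_with_p k \<union> tangent_bases_without_p k"
    by (auto simp: tangent_bases_with_p_def tangent_bases_without_p_def)
  then have "card {vs \<in> singular_bases k. set vs \<subseteq> perp B {p}}
      = card (tangent_bases_with_p k) + card (tangent_bases_without_p k)"
    using finite_tangent_bases
    by (simp add: card_Un_disjoint tangent_bases_with_p_def tangent_bases_without_p_def disjoint_iff)
  then have "(singular_perp_count 0 - 1) * real (card {vs \<in> singular_bases k. set vs \<subseteq> perp B {p}})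
      = real (card (singular_bases k)) * (singular_perp_count k - 1)"
    using card_tangent_bases_invariants[of k] by (simp add: algebra_simps)
  moreover have "card {vs \<in> singular_bases k. set vs \<subseteq> perp B {p}}
      = card {U \<in> k_spaces totally_singular k. U \<subseteq> perp B {p}} * \<beta>"
    unfolding \<beta>_def by (rule card_singular_bases_within[OF subspace_perp])
  moreover have "card (singular_bases k) = card (k_spaces totally_singular k) * \<beta>"
    using card_singular_bases_within[OF vec.subspace_UNIV, of k] by (simp add: \<beta>_def)
  ultimately have "(singular_perp_count 0 - 1)
      * real (card {U \<in> k_spaces totally_singular k. U \<subseteq> perp B {p}}) * real \<beta>
      = real (card (k_spaces totally_singular k)) * (singular_perp_count k - 1) * real \<beta>"
    by (simp add: ac_simps)
  then show ?thesis using \<open>\<beta> > 0\<close> by simp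
qed

lemma card_k_spaces_in_tangent_hyperplane:
  assumes "k < r"
  shows "real (card {U \<in> k_spaces totally_singular k. U \<subseteq> perp B {p}}) =
           (real CARD('a) powr (2*r + e - k - 1) + real CARD('a) ^ r
              - real CARD('a) powr (r + e - 1) - 1)
           / ((real CARD('a) ^ r - 1) * (real CARD('a) powr (r + e - 1) + 1))
           * real (card (k_spaces totally_singular k))"
proof -
  define q where "q = real CARD('a)"
  define X where "X = q powr (r + e - 1)"
  have q: "2 \<le> q" unfolding q_def using two_le_card_field[where 'a='a] by simp
  have "real (2 * r) + e - real k - 1 = (real r + e - 1) + real (r - k)"
    using assms by (simp add: of_nat_diff)
  then have "q powr (2*r + e - k - 1) = X * q powr real (r - k)"
    by (simp only: X_def powr_add)
  then have X_shift: "q powr (2*r + e - k - 1) = X * q ^ (r - k)"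
    using q by (simp add: powr_realpow)
  have "1 < q ^ r" using q rank_pos by (intro one_less_power) auto
  moreover have "0 < X" using q by (simp add: X_def)
  ultimately have "(q ^ r - 1) * (X + 1) \<noteq> 0" by simp
  moreover have "(q ^ r - 1) * (X + 1) * real (card {U \<in> k_spaces totally_singular k. U \<subseteq> perp B {p}})
      = real (card (k_spaces totally_singular k)) * (X * q ^ (r - k) + q ^ r - X - 1)"
    using card_k_spaces_tangent_ratio[of k]
    by (simp add: singular_perp_count_powr q_def X_def algebra_simps)
  ultimately show ?thesis
    unfolding X_shift q_def[symmetric] X_def[symmetric] by (simp add: field_simps)
qed

end

lemma polar_structure_sesquilinear:
  assumes "sesquilinear \<sigma> B" and "reflexive_form B"
  shows "polar_structure B (\<lambda>x. B x x = 0)"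
proof
  have add: "B (x + y) z = B x z + B y z" "B x (y + z) = B x y + B x z" for x y z
    using assms(1) by (auto simp: sesquilinear_def)
  have scale: "B (c *s x) y = c * B x y" "B x (c *s y) = \<sigma> c * B x y" for c x y
    using assms(1) by (auto simp: sesquilinear_def)
  show refl: "B x y = 0 \<longleftrightarrow> B y x = 0" for x y
    using assms(2) by (auto simp: reflexive_form_def)
  show "B (x + y) z = B x z + B y z" "B (c *s x) y = c * B x y" for x y z c
    by (fact add scale)+
  show "B 0 0 = 0" using scale(1)[of 0 0 0] by simp
  show "B (x + y) (x + y) = 0" if "B x x = 0" "B y y = 0" "B x y = 0" for x y
    using that refl[of x y] by (simp add: add)
  show "B (c *s x) (c *s x) = 0" if "B x x = 0" for c x
    using that by (simp add: scale)
qed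

lemma polar_structure_quadratic:
  assumes "quadratic_form Q"
  shows "polar_structure (polar_form Q) (\<lambda>x. Q x = 0)"
proof
  have Q_scale: "Q (c *s x) = c^2 * Q x" for c x
    using assms by (simp add: quadratic_form_def)
  have "sesquilinear id (polar_form Q)" using assms by (simp add: quadratic_form_def)
  then show "polar_form Q (x + y) z = polar_form Q x z + polar_form Q y z"
    and "polar_form Q (c *s x) y = c * polar_form Q x y" for x y z c
    by (simp_all add: sesquilinear_def)
  have "polar_form Q x y = polar_form Q y x" for x y
    unfolding polar_form_def by (simp add: add.commute)
  then show "polar_form Q x y = 0 \<longleftrightarrow> polar_form Q y x = 0" for x y
    by metis
  show "Q 0 = 0" using Q_scale[of 0 0] by simp
  show "Q (x + y) = 0" if "Q x = 0" "Q y = 0" "polar_form Q x y = 0" for x y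
    using that by (simp add: polar_form_def)
  show "Q (c *s x) = 0" if "Q x = 0" for c x
    using that by (simp add: Q_scale)
  show "polar_form Q x x = 0" if "Q x = 0" for x
  proof -
    have "(1 + 1) *s x = x + x" by (simp only: vector_sadd_rdistrib vector_smult_lid)
    then have "Q (x + x) = 0" using Q_scale[of "1 + 1" x] that by simp
    then show ?thesis using that by (simp add: polar_form_def)
  qed
qed

lemma classical_polar_space_polar_structure:
  fixes B :: "'a::{finite,field}^'n \<Rightarrow> 'a^'n \<Rightarrow> 'a"
  assumes "classical_polar_space B TI"
  obtains singular where "polar_structure B singular"
    and "\<And>U. vec.subspace U \<Longrightarrow> TI U = polar_structure.totally_singular B singular U"
  using assms unfolding classical_polar_space_def
proof (elim disjE conjE exE)
  assume "classical_sesquilinear_form B" and TI: "TI = (\<lambda>U. \<forall>u\<in>U. \<forall>v\<in>U. B u v = 0)"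
  then obtain \<sigma> where "sesquilinear \<sigma> B" "reflexive_form B"
    by (auto simp: classical_sesquilinear_form_def)
  then have ps: "polar_structure B (\<lambda>x. B x x = 0)" by (rule polar_structure_sesquilinear)
  show thesis
    by (rule that[OF ps]) (auto simp: TI polar_structure.totally_singular_def[OF ps])
next
  fix Q assume Q: "nondegenerate_quadratic_form Q" and B: "B = polar_form Q"
    and TI: "TI = (\<lambda>U. \<forall>u\<in>U. Q u = 0)"
  have ps: "polar_structure B (\<lambda>x. Q x = 0)"
    unfolding B using Q by (intro polar_structure_quadratic) (simp add: nondegenerate_quadratic_form_def)
  show thesis
  proof (rule that[OF ps])
    fix U :: "('a^'n) set" assume "vec.subspace U"
    then have "(\<forall>u\<in>U. Q u = 0) \<longrightarrow> (\<forall>u\<in>U. \<forall>v\<in>U. B u v = 0)"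
      by (auto simp: B polar_form_def vec.subspace_add)
    then show "TI U = polar_structure.totally_singular B (\<lambda>x. Q x = 0) U"
      by (auto simp: TI polar_structure.totally_singular_def[OF ps])
  qed
qed

theorem lemma5p2:
  fixes B :: "'a::{finite,field}^'n \<Rightarrow> 'a^'n \<Rightarrow> 'a"
    and TI :: "('a^'n) set \<Rightarrow> bool"
    and r k :: nat and e :: real and P H :: "('a^'n) set"
  assumes "classical_polar_space B TI"
    and "polar_rank TI r"
    and "polar_parameter TI r e"
    and "r \<ge> k + 1"
    and "P \<in> k_spaces TI 1"
    and "H = perp B P"
  shows "real (card {U \<in> k_spaces TI k. U \<subseteq> H}) =
           (real CARD('a) powr (2*r + e - k - 1) + real CARD('a) ^ r
              - real CARD('a) powr (r + e - 1) - 1)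
           / ((real CARD('a) ^ r - 1) * (real CARD('a) powr (r + e - 1) + 1))
           * real (card (k_spaces TI k))"
proof -
  obtain singular where ps: "polar_structure B singular"
    and TI: "\<And>U. vec.subspace U \<Longrightarrow> TI U = polar_structure.totally_singular B singular U"
    using classical_polar_space_polar_structure[OF assms(1)] by blast
  interpret polar_structure B singular by (fact ps)
  have k_spaces_eq: "k_spaces TI = k_spaces totally_singular"
    using TI by (auto simp: k_spaces_def fun_eq_iff)
  obtain p where p: "singular p" "p \<noteq> 0" "P = vec.span {p}"
    using k_spaces_1_singular_point assms(5) k_spaces_eq by metis
  have "polar_rank totally_singular r"
    using assms(2) TI by (simp add: polar_rank_def k_spaces_eq)
  moreover have "polar_parameter totally_singular r e"
    using assms(3) by (simp add: polar_parameter_def k_spaces_eq)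
  ultimately interpret polar_structure_point B singular r e p
    using assms(4) p(1,2)
    by (intro polar_structure_point.intro polar_structure_param.intro polar_structure_rank.intro
        polar_structure_point_axioms.intro polar_structure_param_axioms.intro
        polar_structure_rank_axioms.intro ps) simp_all
  have "H = perp B {p}" using assms(6) p(3) perp_span by simp
  moreover have "k < r" using assms(4) by simp
  ultimately show ?thesis
    unfolding k_spaces_eq by (simp only: card_k_spaces_in_tangent_hyperplane)
qed

end
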